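(* Let $K=\mathbb{F}_{q^n}$, let $\sigma$ be an automorphism of $K$ of order $n>1$ with fixed field $F=\mathbb{F}_q$, and let $f\in K[t;\sigma]$ be monic of degree $m\ge 2$, irreducible and not right-invariant, with $n\ge m-1$. Suppose the multiplicative loop $L_f$ of $S_f$ has nucleus $K^\times\cdot 1$. Then $|\{T_c\in\mathrm{Inn}(L_f)\,:\, T_c \text{ is an automorphism of } L_f\}|\ge \frac{q^n-1}{q-1}.$
   Context: $R=K[t;\sigma]$ is the twisted polynomial ring ($tb=\sigma(b)t$ for $b\in K$). $f$ is irreducible if it has no factorization into two factors of smaller degree; right-invariant if $Rf$ is a two-sided ideal. $S_f$ is the set of elements of $R$ of degree $<m$ with multiplication $g\circ h=gh\bmod_r f$ (remainder of right division by $f$), a proper semifield; $L_f=S_f\setminus\{0\}$ is its multiplicative loop. The nucleus of a loop $L$ is the set of $x$ with $(xy)z=x(yz)$, $(yx)z=y(xz)$, $(yz)x=y(zx)$ for all $y,z\in L$. For $x\in L$, $L_x(y)=xy$, $R_x(y)=yx$, and $T_x=L_x^{-1}R_x$ is the middle inner mapping; $\mathrm{Mlt}(L)$ is the group generated by all $L_x,R_x$ and $\mathrm{Inn}(L)=\{g\in\mathrm{Mlt}(L):g(1)=1\}$. *)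

theory Defs
  imports "HOL-Computational_Algebra.Polynomial" "HOL-Algebra.Generated_Groups" "HOL-Algebra.Bij"
begin

(* Twisted polynomial ring K[t;sigma], elements represented by their coefficient
   polynomials ('k poly); multiplication determined by  t b = sigma(b) t, i.e.
   (a t^i)(b t^j) = a sigma^i(b) t^(i+j). *)
definition skew_mult :: "('k::field \<Rightarrow> 'k) \<Rightarrow> 'k poly \<Rightarrow> 'k poly \<Rightarrow> 'k poly" where
  "skew_mult \<sigma> p r =
     (\<Sum>i\<le>degree p. \<Sum>j\<le>degree r. monom (coeff p i * (\<sigma> ^^ i) (coeff r j)) (i + j))"

definition skew_rmod :: "('k::field \<Rightarrow> 'k) \<Rightarrow> 'k poly \<Rightarrow> 'k poly \<Rightarrow> 'k poly" where
  "skew_rmod \<sigma> g f =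
     (THE r. degree r < degree f \<and> (\<exists>q. g = skew_mult \<sigma> q f + r))"

definition skew_irreducible :: "('k::field \<Rightarrow> 'k) \<Rightarrow> 'k poly \<Rightarrow> bool" where
  "skew_irreducible \<sigma> f \<longleftrightarrow>
     \<not> (\<exists>g h. f = skew_mult \<sigma> g h \<and> degree g < degree f \<and> degree h < degree f)"

(* R f is a two-sided ideal, i.e. f R \<subseteq> R f *)
definition right_invariant :: "('k::field \<Rightarrow> 'k) \<Rightarrow> 'k poly \<Rightarrow> bool" where
  "right_invariant \<sigma> f \<longleftrightarrow> (\<forall>g. \<exists>h. skew_mult \<sigma> f g = skew_mult \<sigma> h f)"

definition Sf_mult :: "('k::field \<Rightarrow> 'k) \<Rightarrow> 'k poly \<Rightarrow> 'k poly \<Rightarrow> 'k poly \<Rightarrow> 'k poly" where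
  "Sf_mult \<sigma> f g h = skew_rmod \<sigma> (skew_mult \<sigma> g h) f"

definition Lf :: "'k::field poly \<Rightarrow> 'k poly set" where
  "Lf f = {p. degree p < degree f \<and> p \<noteq> 0}"

definition loop_nucleus :: "'a set \<Rightarrow> ('a \<Rightarrow> 'a \<Rightarrow> 'a) \<Rightarrow> 'a set" where
  "loop_nucleus L mul = {x \<in> L. \<forall>y\<in>L. \<forall>z\<in>L.
      mul (mul x y) z = mul x (mul y z) \<and>
      mul (mul y x) z = mul y (mul x z) \<and>
      mul (mul y z) x = mul y (mul z x)}"

definition lmult_map :: "'a set \<Rightarrow> ('a \<Rightarrow> 'a \<Rightarrow> 'a) \<Rightarrow> 'a \<Rightarrow> 'a \<Rightarrow> 'a" where
  "lmult_map L mul x = (\<lambda>y\<in>L. mul x y)"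

definition rmult_map :: "'a set \<Rightarrow> ('a \<Rightarrow> 'a \<Rightarrow> 'a) \<Rightarrow> 'a \<Rightarrow> 'a \<Rightarrow> 'a" where
  "rmult_map L mul x = (\<lambda>y\<in>L. mul y x)"

definition Mlt :: "'a set \<Rightarrow> ('a \<Rightarrow> 'a \<Rightarrow> 'a) \<Rightarrow> ('a \<Rightarrow> 'a) set" where
  "Mlt L mul = generate (BijGroup L)
      ((lmult_map L mul ` L) \<union> (rmult_map L mul ` L))"

definition Inn :: "'a set \<Rightarrow> ('a \<Rightarrow> 'a \<Rightarrow> 'a) \<Rightarrow> 'a \<Rightarrow> ('a \<Rightarrow> 'a) set" where
  "Inn L mul e = {g \<in> Mlt L mul. g e = e}"

definition middle_inner :: "'a set \<Rightarrow> ('a \<Rightarrow> 'a \<Rightarrow> 'a) \<Rightarrow> 'a \<Rightarrow> 'a \<Rightarrow> 'a" where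
  "middle_inner L mul x =
     inv\<^bsub>BijGroup L\<^esub> (lmult_map L mul x) \<otimes>\<^bsub>BijGroup L\<^esub> rmult_map L mul x"

definition loop_automorphism :: "'a set \<Rightarrow> ('a \<Rightarrow> 'a \<Rightarrow> 'a) \<Rightarrow> ('a \<Rightarrow> 'a) \<Rightarrow> bool" where
  "loop_automorphism L mul \<phi> \<longleftrightarrow>
     bij_betw \<phi> L L \<and> (\<forall>x\<in>L. \<forall>y\<in>L. \<phi> (mul x y) = mul (\<phi> x) (\<phi> y))"

end

theory Submission
  imports Defs
begin

(* Every nonzero constant c is nuclear in L_f, so the middle inner mapping
   T_c = L_c^-1 R_c is z |-> c^-1 (z c): it fixes 1, lies in Mlt(L_f), and is
   multiplicative because c and c^-1 may be moved freely through products.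
   Since T_c(t) = (sigma(c)/c) t, T_c = T_d forces d/c into the fixed field F,
   so the map c |-> T_c on the q^n - 1 units of K has fibres of size at most q - 1.
   Irreducibility of f is needed only to make L_f closed under multiplication. *)

lemma finite_degree_le:
  assumes "finite (UNIV :: 'a::comm_monoid_add set)"
  shows "finite {p :: 'a poly. degree p \<le> d}"
proof -
  have "{p :: 'a poly. degree p \<le> d} \<subseteq> (\<lambda>c. \<Sum>i\<le>d. monom (c i) i) ` (PiE {..d} (\<lambda>_. UNIV))"
  proof
    fix p :: "'a poly" assume "p \<in> {p. degree p \<le> d}"
    then have "p = (\<Sum>i\<le>d. monom (restrict (coeff p) {..d} i) i)"
      by (simp add: poly_as_sum_of_monoms')
    moreover have "restrict (coeff p) {..d} \<in> PiE {..d} (\<lambda>_. UNIV)" by simp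
    ultimately show "p \<in> (\<lambda>c. \<Sum>i\<le>d. monom (c i) i) ` (PiE {..d} (\<lambda>_. UNIV))" by blast
  qed
  moreover have "finite (PiE {..d} (\<lambda>_. UNIV :: 'a set))" using assms by (intro finite_PiE) auto
  ultimately show ?thesis by (meson finite_imageI finite_subset)
qed

locale twisted_poly =
  fixes \<sigma> :: "'k::field \<Rightarrow> 'k"
  assumes sigma_add: "\<And>x y. \<sigma> (x + y) = \<sigma> x + \<sigma> y"
    and sigma_mult: "\<And>x y. \<sigma> (x * y) = \<sigma> x * \<sigma> y"
    and sigma_bij: "bij \<sigma>"
begin

abbreviation skew_times :: "'k poly \<Rightarrow> 'k poly \<Rightarrow> 'k poly" (infixl "\<star>" 70)
  where "p \<star> r \<equiv> skew_mult \<sigma> p r"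

lemma funpow_sigma_add: "(\<sigma> ^^ i) (x + y) = (\<sigma> ^^ i) x + (\<sigma> ^^ i) y"
  by (induction i) (auto simp: sigma_add)

lemma funpow_sigma_mult: "(\<sigma> ^^ i) (x * y) = (\<sigma> ^^ i) x * (\<sigma> ^^ i) y"
  by (induction i) (auto simp: sigma_mult)

lemma funpow_sigma_eq_iff: "(\<sigma> ^^ i) x = (\<sigma> ^^ i) y \<longleftrightarrow> x = y"
  using bij_fn[OF sigma_bij, of i] by (meson bij_is_inj injD)

lemma funpow_sigma_0 [simp]: "(\<sigma> ^^ i) 0 = 0"
proof -
  have "(\<sigma> ^^ i) 0 + (\<sigma> ^^ i) 0 = (\<sigma> ^^ i) 0 + 0"
    using funpow_sigma_add[of i 0 0] by simp
  then show ?thesis by (simp only: add_left_cancel)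
qed

lemma funpow_sigma_eq_0_iff [simp]: "(\<sigma> ^^ i) x = 0 \<longleftrightarrow> x = 0"
  using funpow_sigma_eq_iff[of i x 0] by simp

lemma funpow_sigma_1 [simp]: "(\<sigma> ^^ i) 1 = 1"
proof -
  have "(\<sigma> ^^ i) 1 * (\<sigma> ^^ i) 1 = (\<sigma> ^^ i) 1 * 1"
    using funpow_sigma_mult[of i 1 1] by simp
  then show ?thesis by (metis funpow_sigma_eq_0_iff mult_left_cancel one_neq_zero)
qed

lemma skew_mult_bounded_sum:
  assumes "degree p \<le> N" "degree r \<le> M"
  shows "p \<star> r = (\<Sum>i\<le>N. \<Sum>j\<le>M. monom (coeff p i * (\<sigma> ^^ i) (coeff r j)) (i + j))"
proof -
  have inner: "(\<Sum>j\<le>M. monom (coeff p i * (\<sigma> ^^ i) (coeff r j)) (i + j))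
     = (\<Sum>j\<le>degree r. monom (coeff p i * (\<sigma> ^^ i) (coeff r j)) (i + j))" for i
    by (rule sum.mono_neutral_right) (use assms in \<open>auto simp: coeff_eq_0\<close>)
  have "(\<Sum>i\<le>N. \<Sum>j\<le>degree r. monom (coeff p i * (\<sigma> ^^ i) (coeff r j)) (i + j))
     = (\<Sum>i\<le>degree p. \<Sum>j\<le>degree r. monom (coeff p i * (\<sigma> ^^ i) (coeff r j)) (i + j))"
    by (rule sum.mono_neutral_right) (use assms in \<open>auto simp: coeff_eq_0\<close>)
  then show ?thesis by (simp add: inner skew_mult_def)
qed

lemma skew_mult_add_left: "(p + p') \<star> r = p \<star> r + p' \<star> r"
proof -
  let ?N = "max (degree p) (degree p')"
  have "degree (p + p') \<le> ?N" by (rule degree_add_le) auto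
  then show ?thesis
    by (simp add: skew_mult_bounded_sum[of _ ?N r "degree r"] distrib_right
        add_monom[symmetric] sum.distrib)
qed

lemma skew_mult_add_right: "p \<star> (r + r') = p \<star> r + p \<star> r'"
proof -
  let ?M = "max (degree r) (degree r')"
  have "degree (r + r') \<le> ?M" by (rule degree_add_le) auto
  then show ?thesis
    by (simp add: skew_mult_bounded_sum[of p "degree p" _ ?M] funpow_sigma_add distrib_left
        add_monom[symmetric] sum.distrib)
qed

lemma skew_mult_0_left [simp]: "0 \<star> r = 0"
  by (simp add: skew_mult_def)

lemma skew_mult_0_right [simp]: "p \<star> 0 = 0"
  by (simp add: skew_mult_def)

lemma skew_mult_diff_left: "(p - p') \<star> r = p \<star> r - p' \<star> r"
  using skew_mult_add_left[of "p - p'" p' r] by (simp add: eq_diff_eq)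

lemma skew_mult_sum_left: "(\<Sum>i\<in>I. P i) \<star> r = (\<Sum>i\<in>I. P i \<star> r)"
  by (induction I rule: infinite_finite_induct) (auto simp: skew_mult_add_left)

lemma skew_mult_sum_right: "p \<star> (\<Sum>i\<in>I. P i) = (\<Sum>i\<in>I. p \<star> P i)"
  by (induction I rule: infinite_finite_induct) (auto simp: skew_mult_add_right)

lemma skew_mult_monom: "monom a i \<star> monom b j = monom (a * (\<sigma> ^^ i) b) (i + j)"
proof -
  have "monom a i \<star> monom b j =
     (\<Sum>i'\<le>i. \<Sum>j'\<le>j. monom (coeff (monom a i) i' * (\<sigma> ^^ i') (coeff (monom b j) j')) (i' + j'))"
    by (rule skew_mult_bounded_sum) (auto simp: degree_monom_le)
  also have "\<dots> = (\<Sum>i'\<le>i. \<Sum>j'\<le>j.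
      if j' = j then if i' = i then monom (a * (\<sigma> ^^ i) b) (i + j) else 0 else 0)"
    by (intro sum.cong refl) (auto simp: coeff_monom)
  finally show ?thesis by (simp add: sum.delta')
qed

lemma skew_mult_assoc: "(p \<star> r) \<star> s = p \<star> (r \<star> s)"
proof -
  have monoms: "(monom a i \<star> monom b j) \<star> s = monom a i \<star> (monom b j \<star> s)" for a b i j
  proof -
    have "(monom a i \<star> monom b j) \<star> (\<Sum>l\<le>degree s. monom (coeff s l) l)
        = monom a i \<star> (monom b j \<star> (\<Sum>l\<le>degree s. monom (coeff s l) l))"
      by (simp add: skew_mult_sum_right skew_mult_monom funpow_sigma_mult funpow_add
          mult.assoc add.assoc)
    then show ?thesis by (simp only: poly_as_sum_of_monoms)
  qed
  have monom_left: "(monom a i \<star> r) \<star> s = monom a i \<star> (r \<star> s)" for a i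
  proof -
    have "(monom a i \<star> (\<Sum>j\<le>degree r. monom (coeff r j) j)) \<star> s
        = monom a i \<star> ((\<Sum>j\<le>degree r. monom (coeff r j) j) \<star> s)"
      by (simp add: skew_mult_sum_right skew_mult_sum_left monoms)
    then show ?thesis by (simp only: poly_as_sum_of_monoms)
  qed
  have "((\<Sum>i\<le>degree p. monom (coeff p i) i) \<star> r) \<star> s
      = (\<Sum>i\<le>degree p. monom (coeff p i) i) \<star> (r \<star> s)"
    by (simp add: skew_mult_sum_left monom_left)
  then show ?thesis by (simp only: poly_as_sum_of_monoms)
qed

lemma coeff_skew_mult: "coeff (p \<star> r) k =
   (\<Sum>i\<le>degree p. \<Sum>j\<le>degree r. if i + j = k then coeff p i * (\<sigma> ^^ i) (coeff r j) else 0)"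
  by (simp add: skew_mult_def coeff_sum coeff_monom)

lemma degree_skew_mult_le: "degree (p \<star> r) \<le> degree p + degree r"
  by (rule degree_le) (auto simp: coeff_skew_mult intro!: sum.neutral)

lemma coeff_skew_mult_degree:
  "coeff (p \<star> r) (degree p + degree r) = lead_coeff p * (\<sigma> ^^ degree p) (lead_coeff r)"
proof -
  have "coeff (p \<star> r) (degree p + degree r) = (\<Sum>i\<le>degree p. \<Sum>j\<le>degree r.
      if j = degree r then if i = degree p then lead_coeff p * (\<sigma> ^^ degree p) (lead_coeff r)
      else 0 else 0)"
    unfolding coeff_skew_mult by (intro sum.cong refl) auto
  then show ?thesis by (simp add: sum.delta')
qed

lemma degree_skew_mult: "p \<noteq> 0 \<Longrightarrow> r \<noteq> 0 \<Longrightarrow> degree (p \<star> r) = degree p + degree r"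
  by (intro antisym degree_skew_mult_le le_degree) (simp add: coeff_skew_mult_degree)

lemma skew_mult_eq_0_iff: "p \<star> r = 0 \<longleftrightarrow> p = 0 \<or> r = 0"
  by (metis coeff_0 coeff_skew_mult_degree funpow_sigma_eq_0_iff leading_coeff_0_iff
      mult_eq_0_iff skew_mult_0_left skew_mult_0_right)

lemma skew_mult_const_left: "[:c:] \<star> p = smult c p"
proof (rule poly_eqI)
  fix k
  have "coeff ([:c:] \<star> p) k = (\<Sum>j\<le>degree p. if j = k then c * coeff p j else 0)"
    by (simp add: coeff_skew_mult)
  also have "\<dots> = c * coeff p k" by (auto simp: coeff_eq_0)
  finally show "coeff ([:c:] \<star> p) k = coeff (smult c p) k" by simp
qed

lemma skew_mult_one_left: "1 \<star> p = p"
  using skew_mult_const_left[of 1 p] by (simp add: one_pCons)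

lemma skew_mult_one_right: "p \<star> 1 = p"
proof -
  have "(\<Sum>i\<le>degree p. monom (coeff p i) i) \<star> monom 1 0 = (\<Sum>i\<le>degree p. monom (coeff p i) i)"
    by (simp add: skew_mult_sum_left skew_mult_monom[of _ _ 1 0, simplified])
  then show ?thesis by (simp add: poly_as_sum_of_monoms)
qed

lemma degree_skew_mult_const_right: "degree (p \<star> [:c:]) \<le> degree p"
  using degree_skew_mult_le[of p "[:c:]"] by simp

lemma skew_division:
  assumes "d \<noteq> 0"
  shows "\<exists>q r. g = q \<star> d + r \<and> (r = 0 \<or> degree r < degree d)"
proof (induction "degree g" arbitrary: g rule: less_induct)
  case less
  show ?case
  proof (cases "g = 0 \<or> degree g < degree d")
    case True
    then show ?thesis by (intro exI[of _ 0] exI[of _ g]) auto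
  next
    case False
    then have g0: "g \<noteq> 0" and dle: "degree d \<le> degree g" by auto
    define k where "k = degree g - degree d"
    define c where "c = lead_coeff g / (\<sigma> ^^ k) (lead_coeff d)"
    have lcd: "(\<sigma> ^^ k) (lead_coeff d) \<noteq> 0" using assms by simp
    have c0: "c \<noteq> 0" using g0 lcd by (simp add: c_def)
    define g' where "g' = g - monom c k \<star> d"
    have "degree (monom c k \<star> d) = degree g"
      using degree_skew_mult[of "monom c k" d] c0 assms dle by (simp add: k_def degree_monom_eq)
    then have "degree g' \<le> degree g" unfolding g'_def by (intro degree_diff_le) auto
    moreover have "coeff (monom c k \<star> d) (degree g) = lead_coeff g"
      using coeff_skew_mult_degree[of "monom c k" d] c0 dle lcd
      by (simp add: k_def c_def degree_monom_eq)
    then have "coeff g' (degree g) = 0" unfolding g'_def by simp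
    ultimately have "g' = 0 \<or> degree g' < degree g"
      by (metis le_neq_implies_less leading_coeff_0_iff)
    then show ?thesis
    proof
      assume "g' = 0"
      then have "g = monom c k \<star> d + 0" by (simp add: g'_def)
      then show ?thesis by blast
    next
      assume "degree g' < degree g"
      from less[OF this] obtain q r where qr: "g' = q \<star> d + r" "r = 0 \<or> degree r < degree d"
        by blast
      have "g = (q + monom c k) \<star> d + r"
        using qr(1) by (simp add: g'_def skew_mult_add_left algebra_simps)
      with qr(2) show ?thesis by blast
    qed
  qed
qed

lemma skew_remainder_unique:
  assumes "q1 \<star> f + r1 = q2 \<star> f + r2" "degree r1 < degree f" "degree r2 < degree f"
  shows "r1 = r2"
proof (rule ccontr)
  assume "r1 \<noteq> r2"
  then have "q1 \<noteq> q2" using assms(1) by auto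
  have "f \<noteq> 0" using assms(2) by auto
  have "(q1 - q2) \<star> f = r2 - r1" using assms(1) by (simp add: skew_mult_diff_left algebra_simps)
  moreover have "degree ((q1 - q2) \<star> f) \<ge> degree f"
    using \<open>q1 \<noteq> q2\<close> \<open>f \<noteq> 0\<close> by (simp add: degree_skew_mult)
  moreover have "degree (r2 - r1) < degree f" using assms(2,3) by (intro degree_diff_less)
  ultimately show False by simp
qed

lemma skew_rmod_eqI:
  assumes "degree r < degree f" "g = q \<star> f + r"
  shows "skew_rmod \<sigma> g f = r"
  unfolding skew_rmod_def
proof (rule the_equality)
  show "degree r < degree f \<and> (\<exists>q. g = q \<star> f + r)" using assms by blast
next
  fix r' assume "degree r' < degree f \<and> (\<exists>q. g = q \<star> f + r')"
  then obtain q' where "degree r' < degree f" "g = q' \<star> f + r'" by blast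
  then show "r' = r" using assms skew_remainder_unique[of q' f r' q r] by simp
qed

lemma skew_rmod:
  assumes "degree f > 0"
  shows "degree (skew_rmod \<sigma> g f) < degree f" "\<exists>q. g = q \<star> f + skew_rmod \<sigma> g f"
proof -
  have "f \<noteq> 0" using assms by auto
  then obtain q r where qr: "g = q \<star> f + r" "r = 0 \<or> degree r < degree f"
    using skew_division by blast
  have "degree r < degree f" using qr(2) assms by auto
  moreover from this have "skew_rmod \<sigma> g f = r" using qr(1) by (rule skew_rmod_eqI)
  ultimately show "degree (skew_rmod \<sigma> g f) < degree f" "\<exists>q. g = q \<star> f + skew_rmod \<sigma> g f"
    using qr(1) by auto
qed

lemma left_ideal_principal:
  assumes mult_closed: "\<And>u g. g \<in> I \<Longrightarrow> u \<star> g \<in> I"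
    and diff_closed: "\<And>g h. g \<in> I \<Longrightarrow> h \<in> I \<Longrightarrow> g - h \<in> I"
    and e: "e \<in> I" "e \<noteq> 0" and e_min: "\<And>h. h \<in> I \<Longrightarrow> h \<noteq> 0 \<Longrightarrow> degree e \<le> degree h"
    and "g \<in> I"
  shows "\<exists>u. g = u \<star> e"
proof -
  obtain u r where ur: "g = u \<star> e + r" "r = 0 \<or> degree r < degree e"
    using skew_division[OF e(2)] by blast
  have "r = g - u \<star> e" using ur(1) by simp
  then have "r \<in> I" using diff_closed[OF \<open>g \<in> I\<close> mult_closed[OF e(1)]] by simp
  then have "r = 0" using ur(2) e_min[of r] by linarith
  then show ?thesis using ur(1) by auto
qed

lemma skew_bezout_irreducible:
  assumes irr: "skew_irreducible \<sigma> f" and "y \<noteq> 0" "degree y < degree f"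
  shows "\<exists>a b. 1 = a \<star> y + b \<star> f"
proof -
  define B where "B = {a \<star> y + b \<star> f | a b. True}"
  have B_mult: "u \<star> g \<in> B" if "g \<in> B" for u g
  proof -
    from that obtain a b where "g = a \<star> y + b \<star> f" unfolding B_def by blast
    then have "u \<star> g = (u \<star> a) \<star> y + (u \<star> b) \<star> f"
      by (simp add: skew_mult_add_right skew_mult_assoc)
    then show ?thesis unfolding B_def by blast
  qed
  have B_diff: "g - h \<in> B" if "g \<in> B" "h \<in> B" for g h
  proof -
    from that obtain a b a' b' where "g = a \<star> y + b \<star> f" "h = a' \<star> y + b' \<star> f"
      unfolding B_def by blast
    then have "g - h = (a - a') \<star> y + (b - b') \<star> f"
      by (simp add: skew_mult_diff_left algebra_simps)
    then show ?thesis unfolding B_def by blast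
  qed
  have "y = 1 \<star> y + 0 \<star> f" "f = 0 \<star> y + 1 \<star> f" by (simp_all add: skew_mult_one_left)
  then have "y \<in> B" "f \<in> B" unfolding B_def by blast+
  obtain e where e: "e \<in> B" "e \<noteq> 0" and e_min: "\<And>h. h \<in> B \<Longrightarrow> h \<noteq> 0 \<Longrightarrow> degree e \<le> degree h"
    using ex_has_least_nat[of "\<lambda>h. h \<in> B \<and> h \<noteq> 0" y degree] \<open>y \<in> B\<close> \<open>y \<noteq> 0\<close> by blast
  obtain u where f_eq: "f = u \<star> e"
    using left_ideal_principal[OF B_mult B_diff e e_min \<open>f \<in> B\<close>] by blast
  have "degree e = 0"
  proof (rule ccontr)
    assume "degree e \<noteq> 0"
    have "u \<noteq> 0" using f_eq assms(3) by (metis degree_0 not_less0 skew_mult_0_left)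
    then have "degree f = degree u + degree e" using f_eq degree_skew_mult e(2) by simp
    moreover have "degree e < degree f" using e_min[OF \<open>y \<in> B\<close> \<open>y \<noteq> 0\<close>] assms(3) by simp
    ultimately have "degree u < degree f" "degree e < degree f" using \<open>degree e \<noteq> 0\<close> by linarith+
    then show False using irr f_eq unfolding skew_irreducible_def by blast
  qed
  then obtain c where "e = [:c:]" using degree0_coeffs by blast
  with e(2) have "e = [:c:]" "c \<noteq> 0" by auto
  then have "[:1/c:] \<star> e = 1" by (simp add: skew_mult_const_left one_pCons)
  then have "1 \<in> B" using B_mult[OF e(1), of "[:1/c:]"] by simp
  then show ?thesis unfolding B_def by blast
qed

text \<open>The Bezout identity \<open>1 = a y + b f\<close> makes \<open>r \<mapsto> r y mod f\<close> map the polynomials of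
  degree \<open>< deg g\<^sub>0\<close> onto those of degree \<open>< deg f\<close>, where \<open>g\<^sub>0 \<noteq> 0\<close> is of least degree
  with \<open>g\<^sub>0 y \<in> R f\<close>; as \<open>deg g\<^sub>0 \<le> deg x < deg f\<close>, counting rules this out.\<close>

lemma skew_rmod_mult_neq_0:
  assumes fin: "finite (UNIV :: 'k set)" and irr: "skew_irreducible \<sigma> f"
    and "x \<noteq> 0" "degree x < degree f" and "y \<noteq> 0" "degree y < degree f"
  shows "skew_rmod \<sigma> (x \<star> y) f \<noteq> 0"
proof
  assume rmod_0: "skew_rmod \<sigma> (x \<star> y) f = 0"
  have f_pos: "degree f > 0" using assms(4) by simp
  obtain a b where bezout: "1 = a \<star> y + b \<star> f"
    using skew_bezout_irreducible[OF irr assms(5,6)] by blast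
  define A where "A = {g. \<exists>q. g \<star> y = q \<star> f}"
  have "x \<in> A" using skew_rmod(2)[OF f_pos, of "x \<star> y"] rmod_0 unfolding A_def by auto
  obtain g0 where "g0 \<in> A" "g0 \<noteq> 0" and g0_min: "\<And>h. h \<in> A \<Longrightarrow> h \<noteq> 0 \<Longrightarrow> degree g0 \<le> degree h"
    using ex_has_least_nat[of "\<lambda>h. h \<in> A \<and> h \<noteq> 0" x degree] \<open>x \<in> A\<close> \<open>x \<noteq> 0\<close> by blast
  obtain q0 where q0: "g0 \<star> y = q0 \<star> f" using \<open>g0 \<in> A\<close> unfolding A_def by blast
  define d0 where "d0 = degree g0"
  have d0_less: "d0 < degree f" using g0_min[OF \<open>x \<in> A\<close> \<open>x \<noteq> 0\<close>] assms(4) by (simp add: d0_def)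
  define P where "P d = {p :: 'k poly. p = 0 \<or> degree p < d}" for d
  define \<phi> where "\<phi> r = skew_rmod \<sigma> (r \<star> y) f" for r
  have surj: "P (degree f) \<subseteq> \<phi> ` P d0"
  proof
    fix h assume "h \<in> P (degree f)"
    then have dh: "degree h < degree f" using f_pos by (auto simp: P_def)
    obtain s r where sr: "h \<star> a = s \<star> g0 + r" "r = 0 \<or> degree r < d0"
      using skew_division[OF \<open>g0 \<noteq> 0\<close>] unfolding d0_def by blast
    obtain q' where q': "r \<star> y = q' \<star> f + \<phi> r" and "degree (\<phi> r) < degree f"
      using skew_rmod[OF f_pos, of "r \<star> y"] unfolding \<phi>_def by blast
    have "h = h \<star> a \<star> y + h \<star> b \<star> f"
      using arg_cong[OF bezout, of "skew_mult \<sigma> h"]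
      by (simp add: skew_mult_one_right skew_mult_add_right skew_mult_assoc)
    also have "\<dots> = (s \<star> q0 + q' + h \<star> b) \<star> f + \<phi> r"
      using sr(1) q' q0 by (simp add: skew_mult_add_left skew_mult_assoc algebra_simps)
    finally have "0 \<star> f + h = (s \<star> q0 + q' + h \<star> b) \<star> f + \<phi> r" by simp
    then show "h \<in> \<phi> ` P d0"
      using skew_remainder_unique[of 0 f h "s \<star> q0 + q' + h \<star> b" "\<phi> r"] dh
        \<open>degree (\<phi> r) < degree f\<close> sr(2) by (auto simp: P_def)
  qed
  have strict: "P d0 \<subset> P (degree f)"
  proof
    show "P d0 \<subseteq> P (degree f)" using d0_less by (auto simp: P_def)
    have "monom 1 d0 \<in> P (degree f) - P d0" using d0_less by (auto simp: P_def degree_monom_eq)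
    then show "P d0 \<noteq> P (degree f)" by blast
  qed
  have fin_P: "finite (P (degree f))"
    by (rule finite_subset[OF _ finite_degree_le[OF fin, of "degree f"]]) (auto simp: P_def)
  have "card (P (degree f)) \<le> card (\<phi> ` P d0)"
    using surj fin_P strict by (meson card_mono finite_imageI finite_subset psubset_imp_subset)
  also have "\<dots> \<le> card (P d0)" by (rule card_image_le) (use fin_P strict in \<open>meson finite_subset psubset_imp_subset\<close>)
  also have "\<dots> < card (P (degree f))" by (rule psubset_card_mono[OF fin_P strict])
  finally show False by simp
qed

end

lemma card_le_card_image_mult:
  assumes "finite A" "\<And>a. a \<in> A \<Longrightarrow> card {b \<in> A. g b = g a} \<le> k"
  shows "card A \<le> card (g ` A) * k"
proof -
  have "A = (\<Union>y\<in>g ` A. {b \<in> A. g b = y})" by auto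
  then have "card A \<le> (\<Sum>y\<in>g ` A. card {b \<in> A. g b = y})"
    by (metis card_UN_le assms(1) finite_imageI)
  also have "\<dots> \<le> (\<Sum>y\<in>g ` A. k)" by (intro sum_mono) (use assms(2) in auto)
  finally show ?thesis by simp
qed

lemma middle_inner_Bij:
  assumes "lmult_map L mul x \<in> Bij L" "rmult_map L mul x \<in> Bij L"
  shows "middle_inner L mul x \<in> Bij L"
proof -
  interpret group "BijGroup L" by (rule group_BijGroup)
  have "lmult_map L mul x \<in> carrier (BijGroup L)" "rmult_map L mul x \<in> carrier (BijGroup L)"
    using assms by (simp_all add: BijGroup_def)
  then have "middle_inner L mul x \<in> carrier (BijGroup L)"
    unfolding middle_inner_def by (intro m_closed inv_closed)
  then show ?thesis by (simp add: BijGroup_def)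
qed

lemma mult_BijGroup: "g \<in> Bij S \<Longrightarrow> h \<in> Bij S \<Longrightarrow> g \<otimes>\<^bsub>BijGroup S\<^esub> h = compose S g h"
  by (simp add: BijGroup_def)

lemma middle_inner_apply:
  assumes "lmult_map L mul x \<in> Bij L" "rmult_map L mul x \<in> Bij L" "z \<in> L"
  shows "middle_inner L mul x z = inv_into L (lmult_map L mul x) (mul z x)"
proof -
  have inv: "inv\<^bsub>BijGroup L\<^esub> (lmult_map L mul x) = (\<lambda>w\<in>L. inv_into L (lmult_map L mul x) w)"
    by (rule inv_BijGroup[OF assms(1)])
  have "middle_inner L mul x = compose L (\<lambda>w\<in>L. inv_into L (lmult_map L mul x) w) (rmult_map L mul x)"
    unfolding middle_inner_def inv
    by (rule mult_BijGroup[OF restrict_inv_into_Bij[OF assms(1)] assms(2)])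
  moreover have "mul z x \<in> L"
    using funcset_mem[OF Bij_imp_funcset[OF assms(2)] assms(3)] assms(3) by (simp add: rmult_map_def)
  ultimately show ?thesis
    using assms(3) by (simp add: compose_def rmult_map_def)
qed

lemma middle_inner_in_Mlt: "x \<in> L \<Longrightarrow> middle_inner L mul x \<in> Mlt L mul"
  unfolding Mlt_def middle_inner_def by (intro generate.eng generate.inv generate.incl) auto

lemma loop_nucleusD:
  assumes "a \<in> loop_nucleus L mul" "y \<in> L" "z \<in> L"
  shows "a \<in> L" "mul (mul a y) z = mul a (mul y z)" "mul (mul y a) z = mul y (mul a z)"
    "mul (mul y z) a = mul y (mul z a)"
  using assms unfolding loop_nucleus_def by blast+

lemma nucleus_conjugation_mult:
  assumes c: "c \<in> loop_nucleus L mul" and d: "d \<in> loop_nucleus L mul"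
    and closed: "\<And>a b. a \<in> L \<Longrightarrow> b \<in> L \<Longrightarrow> mul a b \<in> L"
    and x: "x \<in> L" and y: "y \<in> L" and x_cd: "mul x (mul c d) = x"
  shows "mul d (mul (mul x y) c) = mul (mul d (mul x c)) (mul d (mul y c))"
proof -
  have "c \<in> L" "d \<in> L" using loop_nucleusD(1)[OF c x x] loop_nucleusD(1)[OF d x x] .
  then have xc: "mul x c \<in> L" and yc: "mul y c \<in> L" using closed x y by auto
  have "mul (mul d (mul x c)) (mul d (mul y c)) = mul d (mul (mul x c) (mul d (mul y c)))"
    using loop_nucleusD(2)[OF d xc closed[OF \<open>d \<in> L\<close> yc]] .
  also have "\<dots> = mul d (mul (mul (mul x c) d) (mul y c))"
    using loop_nucleusD(3)[OF d xc yc] by simp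
  also have "\<dots> = mul d (mul x (mul y c))"
    using loop_nucleusD(4)[OF d x \<open>c \<in> L\<close>] x_cd by simp
  also have "\<dots> = mul d (mul (mul x y) c)"
    using loop_nucleusD(4)[OF c x y] by simp
  finally show ?thesis by simp
qed

locale petit_loop = twisted_poly \<sigma> for \<sigma> :: "'k::{field,finite} \<Rightarrow> 'k" +
  fixes f :: "'k poly"
  assumes degree_f: "degree f \<ge> 2"
    and irreducible_f: "skew_irreducible \<sigma> f"
    and const_in_nucleus: "\<And>c. c \<noteq> 0 \<Longrightarrow> [:c:] \<in> loop_nucleus (Lf f) (Sf_mult \<sigma> f)"
begin

abbreviation L :: "'k poly set" where "L \<equiv> Lf f"

abbreviation mul :: "'k poly \<Rightarrow> 'k poly \<Rightarrow> 'k poly" where "mul \<equiv> Sf_mult \<sigma> f"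

abbreviation T :: "'k \<Rightarrow> 'k poly \<Rightarrow> 'k poly" where "T c \<equiv> middle_inner L mul [:c:]"

lemma degree_f_pos: "degree f > 0"
  using degree_f by simp

lemma mem_L_iff: "p \<in> L \<longleftrightarrow> degree p < degree f \<and> p \<noteq> 0"
  by (simp add: Lf_def)

lemma const_in_L: "c \<noteq> 0 \<Longrightarrow> [:c:] \<in> L"
  using degree_f_pos by (simp add: mem_L_iff)

lemma one_in_L: "1 \<in> L"
  using const_in_L[of 1] by (simp add: one_pCons)

lemma Sf_mult_closed: "x \<in> L \<Longrightarrow> y \<in> L \<Longrightarrow> mul x y \<in> L"
  unfolding mem_L_iff Sf_mult_def
  using skew_rmod(1)[OF degree_f_pos] skew_rmod_mult_neq_0[OF _ irreducible_f] by auto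

lemma Sf_mult_const_left: "x \<in> L \<Longrightarrow> mul [:c:] x = smult c x"
  unfolding Sf_mult_def
  by (rule skew_rmod_eqI[of _ _ _ 0])
     (auto simp: mem_L_iff skew_mult_const_left intro: le_less_trans[OF degree_smult_le])

lemma Sf_mult_const_right: "x \<in> L \<Longrightarrow> mul x [:c:] = x \<star> [:c:]"
  unfolding Sf_mult_def
  by (rule skew_rmod_eqI[of _ _ _ 0])
     (auto simp: mem_L_iff intro: le_less_trans[OF degree_skew_mult_const_right])

lemma skew_mult_const_right_in_L: "x \<in> L \<Longrightarrow> c \<noteq> 0 \<Longrightarrow> x \<star> [:c:] \<in> L"
  using degree_skew_mult_const_right[of x c] by (auto simp: mem_L_iff skew_mult_eq_0_iff)

lemma smult_in_L: "x \<in> L \<Longrightarrow> c \<noteq> 0 \<Longrightarrow> smult c x \<in> L"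
  by (simp add: mem_L_iff)

lemma lmult_const_Bij:
  assumes "c \<noteq> 0"
  shows "lmult_map L mul [:c:] \<in> Bij L"
proof -
  have "bij_betw (\<lambda>y\<in>L. mul [:c:] y) L L"
    by (rule bij_betw_byWitness[where f' = "smult (1/c)"])
       (use assms in \<open>auto simp: Sf_mult_const_left smult_in_L\<close>)
  then show ?thesis by (simp add: Bij_def lmult_map_def)
qed

lemma rmult_const_Bij:
  assumes "c \<noteq> 0"
  shows "rmult_map L mul [:c:] \<in> Bij L"
proof -
  have inverse: "y \<star> [:a:] \<star> [:b:] = y" if "a * b = 1" for y a b
    using that by (simp add: skew_mult_assoc skew_mult_const_left skew_mult_one_right
        one_pCons[symmetric])
  have "bij_betw (\<lambda>y\<in>L. mul y [:c:]) L L"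
    by (rule bij_betw_byWitness[where f' = "\<lambda>y. y \<star> [:1/c:]"])
       (use assms in \<open>auto simp: Sf_mult_const_right skew_mult_const_right_in_L inverse\<close>)
  then show ?thesis by (simp add: Bij_def rmult_map_def)
qed

lemma middle_inner_const:
  assumes "c \<noteq> 0" "z \<in> L"
  shows "T c z = smult (1/c) (z \<star> [:c:])"
proof -
  have "bij_betw (lmult_map L mul [:c:]) L L"
    using lmult_const_Bij[OF assms(1)] by (simp add: Bij_def)
  then have "inv_into L (lmult_map L mul [:c:]) (z \<star> [:c:]) = smult (1/c) (z \<star> [:c:])"
    using assms skew_mult_const_right_in_L smult_in_L
    by (intro inv_into_f_eq[OF bij_betw_imp_inj_on]) (auto simp: lmult_map_def Sf_mult_const_left)
  then show ?thesis
    using assms by (simp add: middle_inner_apply lmult_const_Bij rmult_const_Bij Sf_mult_const_right)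
qed

lemma finite_L: "finite L"
  by (rule finite_subset[OF _ finite_degree_le[OF finite_UNIV, of "degree f"]])
     (auto simp: mem_L_iff)

lemma Sf_mult_one_right: "x \<in> L \<Longrightarrow> mul x 1 = x"
  using Sf_mult_const_right[of x 1] by (simp add: one_pCons[symmetric] skew_mult_one_right)

lemma middle_inner_const_Sf_mult:
  assumes "c \<noteq> 0" "z \<in> L"
  shows "T c z = mul [:1/c:] (mul z [:c:])"
  using assms
  by (simp add: middle_inner_const Sf_mult_const_right Sf_mult_const_left skew_mult_const_right_in_L)

lemma middle_inner_const_Inn: "c \<noteq> 0 \<Longrightarrow> T c \<in> Inn L mul 1"
  using one_in_L const_in_L
  by (simp add: Inn_def middle_inner_in_Mlt middle_inner_const skew_mult_const_left one_pCons)

lemma middle_inner_const_mult: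
  assumes "c \<noteq> 0" "x \<in> L" "y \<in> L"
  shows "T c (mul x y) = mul (T c x) (T c y)"
proof -
  have "mul [:c:] [:1/c:] = 1"
    using assms(1) const_in_L[of "1/c"] by (simp add: Sf_mult_const_left one_pCons)
  then have "mul x (mul [:c:] [:1/c:]) = x" using Sf_mult_one_right[OF assms(2)] by simp
  then show ?thesis
    using nucleus_conjugation_mult[OF const_in_nucleus const_in_nucleus Sf_mult_closed assms(2,3)]
      assms by (simp add: middle_inner_const_Sf_mult Sf_mult_closed)
qed

lemma middle_inner_const_automorphism: "c \<noteq> 0 \<Longrightarrow> loop_automorphism L mul (T c)"
  using middle_inner_Bij[OF lmult_const_Bij rmult_const_Bij] middle_inner_const_mult
  by (simp add: loop_automorphism_def Bij_def)

lemma middle_inner_const_monom: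
  assumes "c \<noteq> 0"
  shows "T c (monom 1 1) = monom (\<sigma> c / c) 1"
proof -
  have "monom 1 1 \<in> L" using degree_f by (simp add: mem_L_iff degree_monom_eq)
  moreover have "monom 1 1 \<star> [:c:] = monom (\<sigma> c) 1"
    using skew_mult_monom[of 1 1 c 0] by (simp add: monom_0)
  ultimately show ?thesis using assms by (simp add: middle_inner_const smult_monom)
qed

lemma middle_inner_const_eq_imp_fixed:
  assumes "c \<noteq> 0" "d \<noteq> 0" "T d = T c"
  shows "\<sigma> (d / c) = d / c"
proof -
  have "\<sigma> d / d = \<sigma> c / c"
    using assms middle_inner_const_monom by (metis monom_eq_iff')
  then have "c * \<sigma> d = d * \<sigma> c" using assms(1,2) by (simp add: field_simps)
  moreover have "\<sigma> d = \<sigma> (d / c) * \<sigma> c" using sigma_mult[of "d / c" c] assms(1) by simp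
  ultimately have "(c * \<sigma> (d / c)) * \<sigma> c = d * \<sigma> c" by (simp add: mult.assoc)
  moreover have "\<sigma> c \<noteq> 0" using funpow_sigma_eq_0_iff[of 1 c] assms(1) by simp
  ultimately have "c * \<sigma> (d / c) = d" by simp
  then show ?thesis using assms(1) by (metis nonzero_mult_div_cancel_left)
qed

lemma card_fixed_nonzero: "card {u. \<sigma> u = u \<and> u \<noteq> 0} = card {u :: 'k. \<sigma> u = u} - 1"
proof -
  have "{u. \<sigma> u = u \<and> u \<noteq> 0} = {u. \<sigma> u = u} - {0}" by auto
  then show ?thesis using funpow_sigma_0[of 1] by (simp add: card_Diff_singleton)
qed

lemma two_le_card_fixed: "2 \<le> card {u :: 'k. \<sigma> u = u}"
proof -
  have "{0, 1} \<subseteq> {u :: 'k. \<sigma> u = u}"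
    using funpow_sigma_0[of 1] funpow_sigma_1[of 1] by simp
  then show ?thesis by (metis card_2_iff card_mono finite zero_neq_one)
qed

lemma card_nonzero_le_card_middle_inner_consts:
  "card (UNIV - {0 :: 'k}) \<le> card (T ` (UNIV - {0})) * card {u. \<sigma> u = u \<and> u \<noteq> 0}"
proof (rule card_le_card_image_mult)
  fix c assume c: "c \<in> UNIV - {0 :: 'k}"
  have "{d \<in> UNIV - {0}. T d = T c} \<subseteq> (\<lambda>u. c * u) ` {u. \<sigma> u = u \<and> u \<noteq> 0}"
  proof
    fix d assume "d \<in> {d \<in> UNIV - {0}. T d = T c}"
    then have "d \<noteq> 0" "T d = T c" by auto
    then have "d / c \<in> {u. \<sigma> u = u \<and> u \<noteq> 0}"
      using c middle_inner_const_eq_imp_fixed by auto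
    moreover have "d = c * (d / c)" using c by simp
    ultimately show "d \<in> (\<lambda>u. c * u) ` {u. \<sigma> u = u \<and> u \<noteq> 0}" by blast
  qed
  then show "card {d \<in> UNIV - {0}. T d = T c} \<le> card {u. \<sigma> u = u \<and> u \<noteq> 0}"
    by (meson card_image_le card_mono finite dual_order.trans)
qed simp

end

theorem mainTheorem4:
  fixes \<sigma> :: "'k::{field,finite} \<Rightarrow> 'k" and q n m :: nat and f :: "'k poly"
  assumes card_K: "card (UNIV :: 'k set) = q ^ n"
    and n_gt: "n > 1"
    and sigma_bij: "bij \<sigma>"
    and sigma_add: "\<And>x y. \<sigma> (x + y) = \<sigma> x + \<sigma> y"
    and sigma_mult: "\<And>x y. \<sigma> (x * y) = \<sigma> x * \<sigma> y"
    and sigma_order: "\<sigma> ^^ n = id" "\<And>k. 0 < k \<Longrightarrow> k < n \<Longrightarrow> \<sigma> ^^ k \<noteq> id"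
    and fixed_field: "card {x. \<sigma> x = x} = q"
    and monic: "lead_coeff f = 1"
    and deg: "degree f = m" "m \<ge> 2"
    and irred: "skew_irreducible \<sigma> f"
    and not_inv: "\<not> right_invariant \<sigma> f"
    and nm: "n \<ge> m - 1"
    and nucleus: "loop_nucleus (Lf f) (Sf_mult \<sigma> f) = {[:c:] | c. c \<noteq> 0}"
  shows "real (card {middle_inner (Lf f) (Sf_mult \<sigma> f) c | c.
             c \<in> Lf f \<and>
             middle_inner (Lf f) (Sf_mult \<sigma> f) c \<in> Inn (Lf f) (Sf_mult \<sigma> f) 1 \<and>
             loop_automorphism (Lf f) (Sf_mult \<sigma> f) (middle_inner (Lf f) (Sf_mult \<sigma> f) c)})
         \<ge> (real q ^ n - 1) / (real q - 1)"
    (is "real (card ?S) \<ge> _")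
proof -
  interpret petit_loop \<sigma> f
    by unfold_locales (use sigma_add sigma_mult sigma_bij deg irred nucleus in auto)
  have "T ` (UNIV - {0}) \<subseteq> ?S"
    using const_in_L middle_inner_const_Inn middle_inner_const_automorphism by blast
  moreover have "finite ?S"
    by (rule finite_subset[of _ "middle_inner L mul ` L"]) (auto simp: finite_L)
  ultimately have "card (T ` (UNIV - {0})) \<le> card ?S" by (rule card_mono[rotated])
  then have "card (UNIV - {0 :: 'k}) \<le> card ?S * card {u. \<sigma> u = u \<and> u \<noteq> 0}"
    using card_nonzero_le_card_middle_inner_consts mult_le_mono1 le_trans by blast
  moreover have "card {u. \<sigma> u = u \<and> u \<noteq> 0} = q - 1"
    using card_fixed_nonzero fixed_field by simp
  ultimately have "q ^ n - 1 \<le> card ?S * (q - 1)"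
    using card_K by (simp add: card_Diff_singleton)
  then have "real (q ^ n - 1) \<le> real (card ?S * (q - 1))"
    by (simp only: of_nat_le_iff)
  moreover have "q \<ge> 2" using two_le_card_fixed fixed_field by simp
  ultimately have "real q ^ n - 1 \<le> real (card ?S) * (real q - 1)"
    by (simp add: of_nat_diff)
  then show ?thesis using \<open>q \<ge> 2\<close> by (simp add: divide_le_eq)
qed

end
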